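(* $|\mathrm{GHZ}\rangle^{\otimes 17}\stackrel{\textrm{SLOCC}}{\longrightarrow}|\Phi^3\rangle^{\otimes 6}$.
   Context: Three parties $A,B,C$. $|\mathrm{GHZ}\rangle=\frac{1}{\sqrt2}(|000\rangle+|111\rangle)$ with one qubit held by each of $A,B,C$. Let $|\Phi\rangle=|00\rangle+|11\rangle$ (unnormalized EPR state). $|\Phi^3\rangle=|\Phi\rangle_{AB}|\Phi\rangle_{AC}|\Phi\rangle_{BC}$ is the (unnormalized) state in which each pair of parties shares one EPR state, so each party holds two qubits. Tensor powers are taken with each party holding its own parts of all copies. $|\psi\rangle\stackrel{\textrm{SLOCC}}{\longrightarrow}|\phi\rangle$ means $|\psi\rangle$ can be transformed into $|\phi\rangle$ with nonzero probability by local operations and classical communication; equivalently, there exist linear operators $A,B,C$ on the respective parties' spaces with $(A\otimes B\otimes C)|\psi\rangle=|\phi\rangle$ up to a nonzero scalar. *)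

theory Defs
  imports Complex_Main
begin

text \<open>A tripartite tensor: local dimensions (dA, dB, dC) together with its coefficient
  function; coefficient (i,j,k) is the amplitude of basis vector |i>_A |j>_B |k>_C,
  for i < dA, j < dB, k < dC (values outside that range are irrelevant).\<close>
type_synonym tens3 = "(nat \<times> nat \<times> nat) \<times> (nat \<Rightarrow> nat \<Rightarrow> nat \<Rightarrow> complex)"

definition dimA :: "tens3 \<Rightarrow> nat" where "dimA T = fst (fst T)"
definition dimB :: "tens3 \<Rightarrow> nat" where "dimB T = fst (snd (fst T))"
definition dimC :: "tens3 \<Rightarrow> nat" where "dimC T = snd (snd (fst T))"
definition coef :: "tens3 \<Rightarrow> nat \<Rightarrow> nat \<Rightarrow> nat \<Rightarrow> complex" where "coef T = snd T"

definition tprod :: "tens3 \<Rightarrow> tens3 \<Rightarrow> tens3" where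
  "tprod T S =
     ((dimA T * dimA S, dimB T * dimB S, dimC T * dimC S),
      (\<lambda>i j k. coef T (i div dimA S) (j div dimB S) (k div dimC S)
              * coef S (i mod dimA S) (j mod dimB S) (k mod dimC S)))"

fun tpow :: "tens3 \<Rightarrow> nat \<Rightarrow> tens3" where
  "tpow T 0 = ((1, 1, 1), (\<lambda>i j k. 1))"
| "tpow T (Suc n) = tprod T (tpow T n)"

definition GHZ :: tens3 where
  "GHZ = ((2, 2, 2), (\<lambda>i j k. if i = j \<and> j = k \<and> k < 2 then complex_of_real (1 / sqrt 2) else 0))"

text \<open>Unnormalized Phi_AB Phi_AC Phi_BC. A holds (a1,a2) with index 2*a1+a2,
  a1 from the AB pair and a2 from the AC pair; B holds (b1,b2), b1 from AB, b2 from BC;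
  C holds (c1,c2), c1 from AC, c2 from BC.\<close>
definition Phi3 :: tens3 where
  "Phi3 = ((4, 4, 4), (\<lambda>i j k.
      if i < 4 \<and> j < 4 \<and> k < 4 \<and> i div 2 = j div 2 \<and> i mod 2 = k div 2 \<and> j mod 2 = k mod 2
      then 1 else 0))"

definition slocc :: "tens3 \<Rightarrow> tens3 \<Rightarrow> bool" where
  "slocc T S \<longleftrightarrow>
     (\<exists>(A :: nat \<Rightarrow> nat \<Rightarrow> complex) (B :: nat \<Rightarrow> nat \<Rightarrow> complex) (C :: nat \<Rightarrow> nat \<Rightarrow> complex) (c :: complex).
        c \<noteq> 0 \<and>
        (\<forall>i < dimA S. \<forall>j < dimB S. \<forall>k < dimC S.
           (\<Sum>i' < dimA T. \<Sum>j' < dimB T. \<Sum>k' < dimC T.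
               A i i' * B j j' * C k k' * coef T i' j' k') = c * coef S i j k))"

end

theory Submission
  imports Defs
begin

text \<open>
  The state \<open>Phi3\<close> is the tensor of 2 \<times> 2 matrix multiplication, whose tensor rank is at most 7
  by Strassen's algorithm. Tensor rank is submultiplicative under \<open>tprod\<close>, so \<open>Phi3\<^sup>\<otimes>\<^sup>6\<close> has rank
  at most \<open>7\<^sup>6 \<le> 2\<^sup>17\<close>. Finally \<open>GHZ\<^sup>\<otimes>\<^sup>17\<close> is, up to a scalar, the unit tensor of rank \<open>2\<^sup>17\<close>,
  and local maps sending the r-th basis vector to the r-th factors of a rank decomposition turn
  the unit tensor of rank N into any tensor of rank at most N.
\<close>

definition tensor_rank_le :: "nat \<Rightarrow> tens3 \<Rightarrow> bool" where
  "tensor_rank_le n S \<longleftrightarrow> (\<exists>a b c :: nat \<Rightarrow> nat \<Rightarrow> complex.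
     \<forall>i < dimA S. \<forall>j < dimB S. \<forall>k < dimC S.
       (\<Sum>r<n. a r i * b r j * c r k) = coef S i j k)"

lemma tensor_rank_le_mono:
  assumes "tensor_rank_le n S" and "n \<le> m"
  shows "tensor_rank_le m S"
proof -
  obtain a b c where dec: "\<forall>i < dimA S. \<forall>j < dimB S. \<forall>k < dimC S.
      (\<Sum>r<n. a r i * b r j * c r k) = coef S i j k"
    using assms(1) unfolding tensor_rank_le_def by blast
  let ?a = "\<lambda>r i. if r < n then a r i else 0"
  have "(\<Sum>r<m. ?a r i * b r j * c r k) = (\<Sum>r<n. a r i * b r j * c r k)" for i j k
    using \<open>n \<le> m\<close> by (subst sum.mono_neutral_right[of "{..<m}" "{..<n}"]) auto
  then show ?thesis
    unfolding tensor_rank_le_def using dec by (intro exI[of _ ?a] exI[of _ b] exI[of _ c]) simp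
qed

lemma sum_lessThan_mult:
  fixes f :: "nat \<Rightarrow> 'a::comm_monoid_add"
  shows "(\<Sum>r<n * m. f r) = (\<Sum>x<n. \<Sum>y<m. f (x * m + y))"
proof -
  have "(\<Sum>r\<in>{x * m..<x * m + m}. f r) = (\<Sum>y<m. f (x * m + y))" for x
    using sum.shift_bounds_nat_ivl[of f 0 "x * m" m] by (simp add: atLeast0LessThan add.commute)
  then show ?thesis
    by (simp flip: sum.nat_group)
qed

lemma tensor_rank_le_tprod:
  assumes "tensor_rank_le n S" and "tensor_rank_le m T"
  shows "tensor_rank_le (n * m) (tprod S T)"
proof -
  obtain a b c where decS: "\<forall>i < dimA S. \<forall>j < dimB S. \<forall>k < dimC S.
      (\<Sum>r<n. a r i * b r j * c r k) = coef S i j k"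
    using assms(1) unfolding tensor_rank_le_def by blast
  obtain a' b' c' where decT: "\<forall>i < dimA T. \<forall>j < dimB T. \<forall>k < dimC T.
      (\<Sum>r<m. a' r i * b' r j * c' r k) = coef T i j k"
    using assms(2) unfolding tensor_rank_le_def by blast
  let ?a = "\<lambda>r i. a (r div m) (i div dimA T) * a' (r mod m) (i mod dimA T)"
  let ?b = "\<lambda>r j. b (r div m) (j div dimB T) * b' (r mod m) (j mod dimB T)"
  let ?c = "\<lambda>r k. c (r div m) (k div dimC T) * c' (r mod m) (k mod dimC T)"
  have "(\<Sum>r<n * m. ?a r i * ?b r j * ?c r k) = coef (tprod S T) i j k"
    if "i < dimA S * dimA T" "j < dimB S * dimB T" "k < dimC S * dimC T" for i j k
  proof -
    have pos: "dimA T > 0" "dimB T > 0" "dimC T > 0"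
      using that by (auto intro: gr0I)
    have "(\<Sum>r<n * m. ?a r i * ?b r j * ?c r k)
        = (\<Sum>x<n. \<Sum>y<m. (a x (i div dimA T) * b x (j div dimB T) * c x (k div dimC T))
                        * (a' y (i mod dimA T) * b' y (j mod dimB T) * c' y (k mod dimC T)))"
      unfolding sum_lessThan_mult by (intro sum.cong refl) (simp add: algebra_simps)
    also have "\<dots> = (\<Sum>x<n. a x (i div dimA T) * b x (j div dimB T) * c x (k div dimC T))
                   * (\<Sum>y<m. a' y (i mod dimA T) * b' y (j mod dimB T) * c' y (k mod dimC T))"
      by (simp add: sum_product)
    also have "\<dots> = coef S (i div dimA T) (j div dimB T) (k div dimC T)
                   * coef T (i mod dimA T) (j mod dimB T) (k mod dimC T)"
      using decS decT that pos by (simp add: less_mult_imp_div_less)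
    also have "\<dots> = coef (tprod S T) i j k"
      by (simp add: tprod_def coef_def)
    finally show ?thesis .
  qed
  then show ?thesis
    unfolding tensor_rank_le_def
    by (intro exI[of _ ?a] exI[of _ ?b] exI[of _ ?c]) (simp add: tprod_def dimA_def dimB_def dimC_def)
qed

lemma tensor_rank_le_tpow:
  assumes "tensor_rank_le r T"
  shows "tensor_rank_le (r ^ n) (tpow T n)"
proof (induction n)
  case 0
  show ?case
    unfolding tensor_rank_le_def
    by (intro exI[of _ "\<lambda>_ _. 1"]) (simp add: coef_def)
next
  case (Suc n)
  then show ?case
    using tensor_rank_le_tprod[OF assms Suc] by simp
qed

text \<open>Strassen's seven products: row r lists the coefficients of the r-th rank-one term on
  the entries 11, 12, 21, 22 of the respective 2 \<times> 2 matrix.\<close>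

definition strassen_A :: "int list list" where
  "strassen_A = [[1, 0, 0, 1], [0, 1, 0, 1], [1, 0, 0, 0], [0, 0, 0, 1],
                 [1, 0, 1, 0], [-1, 1, 0, 0], [0, 0, 1, -1]]"
definition strassen_B :: "int list list" where
  "strassen_B = [[1, 0, 0, 1], [1, 0, 0, 0], [0, 1, 0, -1], [-1, 0, 1, 0],
                 [0, 0, 0, 1], [1, 1, 0, 0], [0, 0, 1, 1]]"
definition strassen_C :: "int list list" where
  "strassen_C = [[1, 0, 0, 1], [0, 0, 1, -1], [0, 1, 0, 1], [1, 0, 1, 0],
                 [-1, 1, 0, 0], [0, 0, 0, 1], [1, 0, 0, 0]]"

lemma tensor_rank_le_Phi3: "tensor_rank_le 7 Phi3"
proof -
  have less4: "(i::nat) < 4 \<longleftrightarrow> i = 0 \<or> i = 1 \<or> i = 2 \<or> i = 3" for i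
    by auto
  have seven: "{..<7::nat} = {0, 1, 2, 3, 4, 5, 6}"
    by auto
  have "(\<Sum>r<7. of_int (strassen_A!r!i) * of_int (strassen_B!r!j) * of_int (strassen_C!r!k))
      = (if i div 2 = j div 2 \<and> i mod 2 = k div 2 \<and> j mod 2 = k mod 2 then 1 else (0::complex))"
    if "i < 4" "j < 4" "k < 4" for i j k
    using that unfolding less4 seven
    by (auto simp: strassen_A_def strassen_B_def strassen_C_def)
  then show ?thesis
    unfolding tensor_rank_le_def
    by (intro exI[of _ "\<lambda>r i. of_int (strassen_A!r!i)"] exI[of _ "\<lambda>r j. of_int (strassen_B!r!j)"]
          exI[of _ "\<lambda>r k. of_int (strassen_C!r!k)"])
       (simp add: Phi3_def dimA_def dimB_def dimC_def coef_def)
qed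

lemma slocc_diagonal_if_tensor_rank_le:
  assumes dims: "dimA T = N" "dimB T = N" "dimC T = N"
    and diag: "\<And>i j k. i < N \<Longrightarrow> j < N \<Longrightarrow> k < N \<Longrightarrow>
                 coef T i j k = (if i = j \<and> j = k then g else 0)"
    and "g \<noteq> 0" and rank: "tensor_rank_le N S"
  shows "slocc T S"
proof -
  obtain a b c where dec: "\<forall>i < dimA S. \<forall>j < dimB S. \<forall>k < dimC S.
      (\<Sum>r<N. a r i * b r j * c r k) = coef S i j k"
    using rank unfolding tensor_rank_le_def by blast
  have "(\<Sum>i'<N. \<Sum>j'<N. \<Sum>k'<N. a i' i * b j' j * c k' k * coef T i' j' k')
      = g * (\<Sum>r<N. a r i * b r j * c r k)" for i j k
  proof -
    have "(\<Sum>i'<N. \<Sum>j'<N. \<Sum>k'<N. a i' i * b j' j * c k' k * coef T i' j' k')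
        = (\<Sum>i'<N. \<Sum>j'<N. if i' = j' then a i' i * b j' j * c j' k * g else 0)"
      by (intro sum.cong refl)
         (simp add: diag if_distrib[of "\<lambda>t. _ * t"] sum.delta' cong: if_cong)
    also have "\<dots> = g * (\<Sum>r<N. a r i * b r j * c r k)"
      by (simp add: sum.delta sum_distrib_left mult.commute)
    finally show ?thesis .
  qed
  then show ?thesis
    unfolding slocc_def using dec \<open>g \<noteq> 0\<close>
    by (intro exI[of _ "\<lambda>i r. a r i"] exI[of _ "\<lambda>j r. b r j"] exI[of _ "\<lambda>k r. c r k"] exI[of _ g])
       (simp add: dims)
qed

lemma tpow_GHZ_dims:
  "dimA (tpow GHZ n) = 2 ^ n" "dimB (tpow GHZ n) = 2 ^ n" "dimC (tpow GHZ n) = 2 ^ n"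
  by (induction n) (simp_all add: tprod_def dimA_def dimB_def dimC_def GHZ_def)

lemma tpow_GHZ_coef:
  assumes "i < 2 ^ n" "j < 2 ^ n" "k < 2 ^ n"
  shows "coef (tpow GHZ n) i j k = (if i = j \<and> j = k then complex_of_real (1 / sqrt 2) ^ n else 0)"
  using assms
proof (induction n arbitrary: i j k)
  case 0
  then show ?case by (simp add: coef_def)
next
  case (Suc n)
  let ?d = "(2::nat) ^ n"
  have eq_iff: "x = y \<longleftrightarrow> x div ?d = y div ?d \<and> x mod ?d = y mod ?d" for x y :: nat
    by (metis div_mult_mod_eq)
  have "k div ?d < 2"
    using Suc.prems by (simp add: less_mult_imp_div_less)
  have "coef (tpow GHZ (Suc n)) i j k
      = coef GHZ (i div ?d) (j div ?d) (k div ?d) * coef (tpow GHZ n) (i mod ?d) (j mod ?d) (k mod ?d)"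
    by (simp add: tprod_def coef_def tpow_GHZ_dims)
  also have "\<dots> = (if i div ?d = j div ?d \<and> j div ?d = k div ?d then complex_of_real (1 / sqrt 2) else 0)
      * (if i mod ?d = j mod ?d \<and> j mod ?d = k mod ?d then complex_of_real (1 / sqrt 2) ^ n else 0)"
    using Suc.IH[of "i mod ?d" "j mod ?d" "k mod ?d"] \<open>k div ?d < 2\<close> by (simp add: GHZ_def coef_def)
  finally show ?case
    using eq_iff[of i j] eq_iff[of j k] by auto
qed

theorem theorem1:
  shows "slocc (tpow GHZ 17) (tpow Phi3 6)"
proof (rule slocc_diagonal_if_tensor_rank_le)
  show "tensor_rank_le (2 ^ 17) (tpow Phi3 6)"
    using tensor_rank_le_tpow[OF tensor_rank_le_Phi3, of 6] by (rule tensor_rank_le_mono) simp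
  show "complex_of_real (1 / sqrt 2) ^ 17 \<noteq> 0"
    by simp
qed (simp_all add: tpow_GHZ_dims tpow_GHZ_coef)

end
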